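(* Let $n,k\geq 1$ be integers and let $A_1,\dots,A_k,B_1,\dots,B_k\in\mathbb{R}$. For $\alpha\in\mathbb{C}$ put $a_i=A_i+B_i\alpha$ ($i=1,\dots,k$) and $$O_\alpha(z)=z^n\,\frac{a_k+a_{k-1}z+\dots+a_1 z^{k-1}+z^k}{1+a_1 z+\dots+a_{k-1}z^{k-1}+a_k z^k},$$ considered for those $\alpha$ with $a_k\neq 0$ and $1+a_1+\dots+a_k\neq 0$; for such $\alpha$, $z=1$ is a fixed point of $O_\alpha$. Define $$A=n+k+\sum_{j=1}^k(n+k-2j)A_j,\quad B=\sum_{j=1}^k(n+k-2j)B_j,\quad A'=1+\sum_{j=1}^kA_j,\quad B'=\sum_{j=1}^kB_j,$$ and, when $B^2-B'^2\neq0$, $c=(AB-A'B')/(B^2-B'^2)$ and $r=(A'B-AB')/(B^2-B'^2)$. Then: \begin{enumerate} \item If $B^2-B'^2\neq 0$: (i) $z=1$ is indifferent on the circle $C:\ |\alpha+c|=|r|$; (ii) $z=1$ is attracting inside $C$ if $B^2-B'^2>0$ and outside $C$ if $B^2-B'^2<0$; (iii) $z=1$ is repelling outside $C$ if $B^2-B'^2>0$ and inside $C$ if $B^2-B'^2<0$. \item If $B^2-B'^2=0$: (a) if $B=B'\neq0$: $z=1$ is indifferent if $A=A'$; $z=1$ is attracting if either $\mathrm{Re}(\alpha)<-\frac{A+A'}{2B}$ and $B(A-A')>0$, or $\mathrm{Re}(\alpha)>-\frac{A+A'}{2B}$ and $B(A-A')<0$; $z=1$ is repelling otherwise. (b) if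 $B=-B'\neq0$: $z=1$ is indifferent if $A=-A'$; $z=1$ is attracting if either $\mathrm{Re}(\alpha)<\frac{A'-A}{2B}$ and $B(A+A')>0$, or $\mathrm{Re}(\alpha)>\frac{A'-A}{2B}$ and $B(A+A')<0$; $z=1$ is repelling otherwise. (c) if $B=B'=0$: $z=1$ is indifferent if $|A|=|A'|$, attracting if $|A|<|A'|$, and repelling if $|A|>|A'|$. \end{enumerate} Moreover, if $\alpha=-A/B$, the fixed point $z=1$ is superattracting.
   Context: For a fixed point $z_0$ of a rational map $R$ with multiplier $\lambda=R'(z_0)$, $z_0$ is attracting if $|\lambda|<1$, superattracting if $\lambda=0$, repelling if $|\lambda|>1$, and indifferent if $|\lambda|=1$. *)

theory Defs
  imports "HOL-Analysis.Analysis"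
begin

definition coef :: "(nat \<Rightarrow> real) \<Rightarrow> (nat \<Rightarrow> real) \<Rightarrow> complex \<Rightarrow> nat \<Rightarrow> complex" where
  "coef A B \<alpha> i = complex_of_real (A i) + complex_of_real (B i) * \<alpha>"

definition Omap :: "nat \<Rightarrow> nat \<Rightarrow> (nat \<Rightarrow> real) \<Rightarrow> (nat \<Rightarrow> real) \<Rightarrow> complex \<Rightarrow> complex \<Rightarrow> complex" where
  "Omap n k A B \<alpha> z =
     z ^ n * ((z ^ k + (\<Sum>j = 1..k. coef A B \<alpha> j * z ^ (k - j))) /
              (1 + (\<Sum>j = 1..k. coef A B \<alpha> j * z ^ j)))"

definition multiplier :: "(complex \<Rightarrow> complex) \<Rightarrow> complex \<Rightarrow> complex" where
  "multiplier f z0 = deriv f z0"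

definition attracting_fp :: "(complex \<Rightarrow> complex) \<Rightarrow> complex \<Rightarrow> bool" where
  "attracting_fp f z0 \<longleftrightarrow> f z0 = z0 \<and> cmod (multiplier f z0) < 1"

definition superattracting_fp :: "(complex \<Rightarrow> complex) \<Rightarrow> complex \<Rightarrow> bool" where
  "superattracting_fp f z0 \<longleftrightarrow> f z0 = z0 \<and> multiplier f z0 = 0"

definition repelling_fp :: "(complex \<Rightarrow> complex) \<Rightarrow> complex \<Rightarrow> bool" where
  "repelling_fp f z0 \<longleftrightarrow> f z0 = z0 \<and> cmod (multiplier f z0) > 1"

definition indifferent_fp :: "(complex \<Rightarrow> complex) \<Rightarrow> complex \<Rightarrow> bool" where
  "indifferent_fp f z0 \<longleftrightarrow> f z0 = z0 \<and> cmod (multiplier f z0) = 1"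

end

theory Submission
  imports Defs
begin

text \<open>At \<open>z = 1\<close> the numerator and the denominator of the quotient in \<open>O\<^sub>\<alpha>\<close> both equal
  \<open>S = 1 + a\<^sub>1 + \<dots> + a\<^sub>k\<close>, and their derivatives differ by \<open>k + \<Sum> a\<^sub>j (k - 2j)\<close>; hence the
  multiplier is \<open>N / S\<close> with \<open>N = AA + BB \<alpha>\<close> and \<open>S = A' + B' \<alpha>\<close>, both affine in \<open>\<alpha>\<close> with
  real coefficients. The type of the fixed point is the sign of
  \<open>|N|\<^sup>2 - |S|\<^sup>2 = (BB\<^sup>2 - B'\<^sup>2) |\<alpha>|\<^sup>2 + 2 (AA BB - A' B') Re \<alpha> + AA\<^sup>2 - A'\<^sup>2\<close>.
  Completing the square gives \<open>(BB\<^sup>2 - B'\<^sup>2) (|\<alpha> + c|\<^sup>2 - r\<^sup>2)\<close> when \<open>BB\<^sup>2 \<noteq> B'\<^sup>2\<close>; otherwise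
  the quadratic term vanishes and the sign is that of an affine function of \<open>Re \<alpha>\<close>, or a
  constant.\<close>

lemma has_field_derivative_power_mult_quotient:
  fixes f g :: "'a::real_normed_field \<Rightarrow> 'a"
  assumes f: "(f has_field_derivative f') (at z0)" and g: "(g has_field_derivative g') (at z0)"
    and fg: "f z0 = g z0" and nz: "g z0 \<noteq> 0"
  shows "((\<lambda>z. z ^ n * (f z / g z)) has_field_derivative
           of_nat n * z0 ^ (n - 1) + z0 ^ n * (f' - g') / g z0) (at z0)"
proof -
  have "((\<lambda>z. z ^ n * (f z / g z)) has_field_derivative
          of_nat n * (1 * z0 ^ (n - Suc 0)) * (f z0 / g z0) + (f' * g z0 - f z0 * g') / (g z0 * g z0) * z0 ^ n) (at z0)"
    by (intro DERIV_mult DERIV_power DERIV_ident DERIV_divide f g nz)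
  then show ?thesis
    by (rule DERIV_cong) (use nz in \<open>simp add: fg field_simps\<close>)
qed

lemma has_field_derivative_monomial_sum_at_1:
  fixes a :: "nat \<Rightarrow> 'a::real_normed_field"
  shows "((\<lambda>z. \<Sum>j\<in>J. a j * z ^ e j) has_field_derivative (\<Sum>j\<in>J. a j * of_nat (e j))) (at 1)"
  by (auto intro!: derivative_eq_intros simp: mult.commute)

lemma has_field_derivative_power_mult_reciprocal_quotient_at_1:
  fixes a :: "nat \<Rightarrow> 'a::real_normed_field" and k :: nat
  defines "S \<equiv> 1 + (\<Sum>j = 1..k. a j)"
  assumes "S \<noteq> 0"
  shows "((\<lambda>z. z ^ n * ((z ^ k + (\<Sum>j = 1..k. a j * z ^ (k - j))) / (1 + (\<Sum>j = 1..k. a j * z ^ j))))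
           has_field_derivative (of_nat n * S + of_nat k + (\<Sum>j = 1..k. a j * (of_nat k - 2 * of_nat j))) / S) (at 1)"
proof -
  have P: "((\<lambda>z. z ^ k + (\<Sum>j = 1..k. a j * z ^ (k - j))) has_field_derivative
             of_nat k + (\<Sum>j = 1..k. a j * of_nat (k - j))) (at 1)"
    using DERIV_add[OF DERIV_power[OF DERIV_ident, where n=k and x=1 and s=UNIV]
                         has_field_derivative_monomial_sum_at_1[of a "\<lambda>j. k - j" "{1..k}"]]
    by simp
  have Q: "((\<lambda>z. 1 + (\<Sum>j = 1..k. a j * z ^ j)) has_field_derivative
             (\<Sum>j = 1..k. a j * of_nat j)) (at 1)"
    using DERIV_add[OF DERIV_const has_field_derivative_monomial_sum_at_1] by simp
  have "(\<Sum>j = 1..k. a j * of_nat (k - j)) - (\<Sum>j = 1..k. a j * of_nat j)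
        = (\<Sum>j = 1..k. a j * (of_nat k - 2 * of_nat j))"
    unfolding sum_subtractf[symmetric] by (rule sum.cong) (auto simp: of_nat_diff algebra_simps)
  then show ?thesis
    using has_field_derivative_power_mult_quotient[OF P Q, of n] assms
    by (simp add: add.commute) (simp add: field_simps)
qed

lemma sum_weighted_coef:
  "(\<Sum>j\<in>J. of_real (w j) * coef A B \<alpha> j)
     = of_real (\<Sum>j\<in>J. w j * A j) + of_real (\<Sum>j\<in>J. w j * B j) * \<alpha>"
  by (simp add: coef_def distrib_left sum.distrib sum_distrib_right mult.assoc)

lemma sum_coef:
  "(\<Sum>j\<in>J. coef A B \<alpha> j) = of_real (\<Sum>j\<in>J. A j) + of_real (\<Sum>j\<in>J. B j) * \<alpha>"
  using sum_weighted_coef[of "\<lambda>_. 1"] by simp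

lemma Omap_fixes_1:
  assumes "1 + (\<Sum>j = 1..k. coef A B \<alpha> j) \<noteq> 0"
  shows "Omap n k A B \<alpha> 1 = 1"
  using assms by (simp add: Omap_def add.commute)

lemma multiplier_Omap_at_1:
  assumes "1 + (\<Sum>j = 1..k. coef A B \<alpha> j) \<noteq> 0"
  shows "multiplier (Omap n k A B \<alpha>) 1 =
    (of_real (real (n + k) + (\<Sum>j = 1..k. (real n + real k - 2 * real j) * A j))
       + of_real (\<Sum>j = 1..k. (real n + real k - 2 * real j) * B j) * \<alpha>)
    / (of_real (1 + (\<Sum>j = 1..k. A j)) + of_real (\<Sum>j = 1..k. B j) * \<alpha>)"
proof -
  let ?a = "coef A B \<alpha>"
  have num: "of_nat n * (1 + (\<Sum>j = 1..k. ?a j)) + of_nat k + (\<Sum>j = 1..k. ?a j * (of_nat k - 2 * of_nat j))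
      = of_nat (n + k) + (\<Sum>j = 1..k. of_real (real n + real k - 2 * real j) * ?a j)"
    by (simp add: sum_distrib_left algebra_simps flip: sum.distrib)
  have "(Omap n k A B \<alpha> has_field_derivative
      (of_nat (n + k) + (\<Sum>j = 1..k. of_real (real n + real k - 2 * real j) * ?a j))
      / (1 + (\<Sum>j = 1..k. ?a j))) (at 1)"
    using has_field_derivative_power_mult_reciprocal_quotient_at_1[OF assms, of n, unfolded num]
    unfolding Omap_def[abs_def] .
  then show ?thesis
    unfolding multiplier_def sum_weighted_coef sum_coef by (simp add: DERIV_imp_deriv add.assoc)
qed

lemma fixed_point_type_by_quotient_multiplier:
  assumes "f z0 = z0" and "multiplier f z0 = N / D" and "D \<noteq> 0"
  shows "attracting_fp f z0 \<longleftrightarrow> (cmod N)\<^sup>2 - (cmod D)\<^sup>2 < 0"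
    and "repelling_fp f z0 \<longleftrightarrow> (cmod N)\<^sup>2 - (cmod D)\<^sup>2 > 0"
    and "indifferent_fp f z0 \<longleftrightarrow> (cmod N)\<^sup>2 - (cmod D)\<^sup>2 = 0"
    and "superattracting_fp f z0 \<longleftrightarrow> N = 0"
proof -
  have D: "cmod D > 0" using assms(3) by simp
  have sq: "cmod u < cmod v \<longleftrightarrow> (cmod u)\<^sup>2 < (cmod v)\<^sup>2" for u v :: complex
    using abs_le_square_iff[of "cmod v" "cmod u"] by (simp add: not_le[symmetric])
  have "cmod (multiplier f z0) = cmod N / cmod D"
    using assms(2) by (simp add: norm_divide)
  then have "cmod (multiplier f z0) < 1 \<longleftrightarrow> cmod N < cmod D"
    and "cmod (multiplier f z0) > 1 \<longleftrightarrow> cmod D < cmod N"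
    and "cmod (multiplier f z0) = 1 \<longleftrightarrow> cmod N = cmod D"
    using D by (auto simp: divide_less_eq_1_pos less_divide_eq_1_pos)
  then show "attracting_fp f z0 \<longleftrightarrow> (cmod N)\<^sup>2 - (cmod D)\<^sup>2 < 0"
    and "repelling_fp f z0 \<longleftrightarrow> (cmod N)\<^sup>2 - (cmod D)\<^sup>2 > 0"
    and "indifferent_fp f z0 \<longleftrightarrow> (cmod N)\<^sup>2 - (cmod D)\<^sup>2 = 0"
    using assms(1) sq[of N D] sq[of D N]
    by (auto simp: attracting_fp_def repelling_fp_def indifferent_fp_def)
  show "superattracting_fp f z0 \<longleftrightarrow> N = 0"
    using assms by (simp add: superattracting_fp_def)
qed

lemma norm_affine_sq_diff:
  fixes \<alpha> :: complex and a b a' b' :: real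
  shows "(cmod (of_real a + of_real b * \<alpha>))\<^sup>2 - (cmod (of_real a' + of_real b' * \<alpha>))\<^sup>2
           = (b\<^sup>2 - b'\<^sup>2) * (cmod \<alpha>)\<^sup>2 + 2 * (a * b - a' * b') * Re \<alpha> + a\<^sup>2 - a'\<^sup>2"
  unfolding cmod_power2 by (simp add: power2_eq_square algebra_simps)

lemma norm_affine_sq_diff_circle:
  fixes \<alpha> :: complex and a b a' b' c r :: real
  assumes "b\<^sup>2 - b'\<^sup>2 \<noteq> 0"
    and "c = (a * b - a' * b') / (b\<^sup>2 - b'\<^sup>2)" and "r = (a' * b - a * b') / (b\<^sup>2 - b'\<^sup>2)"
  shows "(cmod (of_real a + of_real b * \<alpha>))\<^sup>2 - (cmod (of_real a' + of_real b' * \<alpha>))\<^sup>2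
           = (b\<^sup>2 - b'\<^sup>2) * ((cmod (\<alpha> + of_real c))\<^sup>2 - r\<^sup>2)"
proof -
  let ?d = "b\<^sup>2 - b'\<^sup>2"
  have dc: "?d * c = a * b - a' * b'" and dr: "?d * r = a' * b - a * b'"
    using assms by simp_all
  have "?d * (?d * (c\<^sup>2 - r\<^sup>2)) = (?d * c)\<^sup>2 - (?d * r)\<^sup>2"
    by (simp add: power2_eq_square algebra_simps)
  also have "\<dots> = ?d * (a\<^sup>2 - a'\<^sup>2)"
    unfolding dc dr by (simp add: power2_eq_square algebra_simps)
  finally have cr: "?d * (c\<^sup>2 - r\<^sup>2) = a\<^sup>2 - a'\<^sup>2"
    using assms(1) by simp
  have "(cmod (\<alpha> + of_real c))\<^sup>2 = (cmod \<alpha>)\<^sup>2 + 2 * c * Re \<alpha> + c\<^sup>2"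
    unfolding cmod_power2 by (simp add: power2_eq_square algebra_simps)
  then have "?d * ((cmod (\<alpha> + of_real c))\<^sup>2 - r\<^sup>2)
      = ?d * (cmod \<alpha>)\<^sup>2 + 2 * (?d * c) * Re \<alpha> + ?d * (c\<^sup>2 - r\<^sup>2)"
    by (simp add: algebra_simps)
  then show ?thesis
    unfolding norm_affine_sq_diff dc cr by simp
qed

lemma norm_affine_sq_diff_equal_slopes:
  fixes \<alpha> :: complex and a b a' :: real
  assumes "b \<noteq> 0"
  shows "(cmod (of_real a + of_real b * \<alpha>))\<^sup>2 - (cmod (of_real a' + of_real b * \<alpha>))\<^sup>2
           = 2 * (b * (a - a')) * (Re \<alpha> - - (a + a') / (2 * b))"
  unfolding norm_affine_sq_diff using assms by (simp add: power2_eq_square field_simps)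

lemma norm_affine_sq_diff_opposite_slopes:
  fixes \<alpha> :: complex and a b a' :: real
  assumes "b \<noteq> 0"
  shows "(cmod (of_real a + of_real b * \<alpha>))\<^sup>2 - (cmod (of_real a' + of_real (- b) * \<alpha>))\<^sup>2
           = 2 * (b * (a + a')) * (Re \<alpha> - (a' - a) / (2 * b))"
  unfolding norm_affine_sq_diff using assms by (simp add: power2_eq_square field_simps)

theorem proposition3p5:
  fixes n k :: nat and A B :: "nat \<Rightarrow> real" and \<alpha> :: complex
    and AA BB A' B' c r :: real
  assumes "n \<ge> 1" and "k \<ge> 1"
    and "coef A B \<alpha> k \<noteq> 0"
    and "1 + (\<Sum>j = 1..k. coef A B \<alpha> j) \<noteq> 0"
    and "AA = real (n + k) + (\<Sum>j = 1..k. (real n + real k - 2 * real j) * A j)"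
    and "BB = (\<Sum>j = 1..k. (real n + real k - 2 * real j) * B j)"
    and "A' = 1 + (\<Sum>j = 1..k. A j)"
    and "B' = (\<Sum>j = 1..k. B j)"
    and "c = (AA * BB - A' * B') / (BB\<^sup>2 - B'\<^sup>2)"
    and "r = (A' * BB - AA * B') / (BB\<^sup>2 - B'\<^sup>2)"
  shows
    "Omap n k A B \<alpha> 1 = 1
     \<and> (BB\<^sup>2 - B'\<^sup>2 \<noteq> 0 \<longrightarrow>
          (cmod (\<alpha> + complex_of_real c) = \<bar>r\<bar> \<longrightarrow> indifferent_fp (Omap n k A B \<alpha>) 1)
        \<and> (BB\<^sup>2 - B'\<^sup>2 > 0 \<and> cmod (\<alpha> + complex_of_real c) < \<bar>r\<bar> \<longrightarrow> attracting_fp (Omap n k A B \<alpha>) 1)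
        \<and> (BB\<^sup>2 - B'\<^sup>2 < 0 \<and> cmod (\<alpha> + complex_of_real c) > \<bar>r\<bar> \<longrightarrow> attracting_fp (Omap n k A B \<alpha>) 1)
        \<and> (BB\<^sup>2 - B'\<^sup>2 > 0 \<and> cmod (\<alpha> + complex_of_real c) > \<bar>r\<bar> \<longrightarrow> repelling_fp (Omap n k A B \<alpha>) 1)
        \<and> (BB\<^sup>2 - B'\<^sup>2 < 0 \<and> cmod (\<alpha> + complex_of_real c) < \<bar>r\<bar> \<longrightarrow> repelling_fp (Omap n k A B \<alpha>) 1))
     \<and> (BB = B' \<and> BB \<noteq> 0 \<longrightarrow>
          (AA = A' \<longrightarrow> indifferent_fp (Omap n k A B \<alpha>) 1)
        \<and> ((Re \<alpha> < - (AA + A') / (2 * BB) \<and> BB * (AA - A') > 0)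
            \<or> (Re \<alpha> > - (AA + A') / (2 * BB) \<and> BB * (AA - A') < 0)
            \<longrightarrow> attracting_fp (Omap n k A B \<alpha>) 1)
        \<and> ((Re \<alpha> > - (AA + A') / (2 * BB) \<and> BB * (AA - A') > 0)
            \<or> (Re \<alpha> < - (AA + A') / (2 * BB) \<and> BB * (AA - A') < 0)
            \<longrightarrow> repelling_fp (Omap n k A B \<alpha>) 1))
     \<and> (BB = - B' \<and> BB \<noteq> 0 \<longrightarrow>
          (AA = - A' \<longrightarrow> indifferent_fp (Omap n k A B \<alpha>) 1)
        \<and> ((Re \<alpha> < (A' - AA) / (2 * BB) \<and> BB * (AA + A') > 0)
            \<or> (Re \<alpha> > (A' - AA) / (2 * BB) \<and> BB * (AA + A') < 0)
            \<longrightarrow> attracting_fp (Omap n k A B \<alpha>) 1)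
        \<and> ((Re \<alpha> > (A' - AA) / (2 * BB) \<and> BB * (AA + A') > 0)
            \<or> (Re \<alpha> < (A' - AA) / (2 * BB) \<and> BB * (AA + A') < 0)
            \<longrightarrow> repelling_fp (Omap n k A B \<alpha>) 1))
     \<and> (BB = 0 \<and> B' = 0 \<longrightarrow>
          (\<bar>AA\<bar> = \<bar>A'\<bar> \<longrightarrow> indifferent_fp (Omap n k A B \<alpha>) 1)
        \<and> (\<bar>AA\<bar> < \<bar>A'\<bar> \<longrightarrow> attracting_fp (Omap n k A B \<alpha>) 1)
        \<and> (\<bar>AA\<bar> > \<bar>A'\<bar> \<longrightarrow> repelling_fp (Omap n k A B \<alpha>) 1))
     \<and> (BB \<noteq> 0 \<and> \<alpha> = complex_of_real (- AA / BB) \<longrightarrow> superattracting_fp (Omap n k A B \<alpha>) 1)"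
proof -
  let ?f = "Omap n k A B \<alpha>"
  define N D where "N = of_real AA + of_real BB * \<alpha>" and "D = of_real A' + of_real B' * \<alpha>"
  let ?\<Delta> = "(cmod N)\<^sup>2 - (cmod D)\<^sup>2"
  have fixed: "?f 1 = 1"
    using assms(4) by (rule Omap_fixes_1)
  have "D \<noteq> 0"
    using assms(4) by (simp add: D_def assms(7,8) sum_coef add.assoc)
  have "multiplier ?f 1 = N / D"
    using multiplier_Omap_at_1[OF assms(4)] by (simp add: N_def D_def assms(5-8))
  note type = fixed_point_type_by_quotient_multiplier[OF fixed this \<open>D \<noteq> 0\<close>]
  have circle: "?\<Delta> = (BB\<^sup>2 - B'\<^sup>2) * ((cmod (\<alpha> + of_real c))\<^sup>2 - r\<^sup>2)" if "BB\<^sup>2 - B'\<^sup>2 \<noteq> 0"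
    unfolding N_def D_def using that assms(9,10) by (rule norm_affine_sq_diff_circle)
  have equal: "?\<Delta> = 2 * (BB * (AA - A')) * (Re \<alpha> - - (AA + A') / (2 * BB))" if "BB = B'" "BB \<noteq> 0"
    unfolding N_def D_def using that norm_affine_sq_diff_equal_slopes by blast
  have opposite: "?\<Delta> = 2 * (BB * (AA + A')) * (Re \<alpha> - (A' - AA) / (2 * BB))" if "BB = - B'" "BB \<noteq> 0"
    unfolding N_def D_def using that norm_affine_sq_diff_opposite_slopes[of BB AA \<alpha> A'] by simp
  have flat: "?\<Delta> = \<bar>AA\<bar>\<^sup>2 - \<bar>A'\<bar>\<^sup>2" if "BB = 0" "B' = 0"
    unfolding N_def D_def norm_affine_sq_diff using that by simp
  have "superattracting_fp ?f 1" if "BB \<noteq> 0" "\<alpha> = of_real (- AA / BB)"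
    unfolding type N_def using that by (simp add: field_simps)
  with fixed show ?thesis
    by (auto simp: type circle equal opposite flat mult_less_0_iff zero_less_mult_iff
          power2_strict_mono abs_le_square_iff)
qed

end
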